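(* Let $b\ge3$, $D\subset\{0,\dots,b-1\}$ with $2\le|D|\le b$, list $\mathcal C=\mathcal C_{b,D}$ increasingly as $k_1<k_2<\cdots$, and let $s=\gcd\{d-d':d,d'\in D\}$. Consider $L(\alpha,\beta)=\lim_{N\to\infty}\frac1N\sum_{n=1}^N e(k_n\alpha+s_b(k_n)\beta)$. (1) If $s=1$, the limit exists for all real $\alpha,\beta$; if it is nonzero then there are integers $a,r,t$ with $\alpha\equiv\frac{a}{b-1}+\frac{r}{b^t}$ and $\beta\equiv-\frac{a}{b-1}\pmod 1$. (2) If $s>1$ and $s\mid d$ for all $d\in D$, the limit exists for all $\alpha,\beta$; if it is nonzero then there are integers $a,r,t$ with $s\alpha\equiv\frac{a}{b-1}+\frac{r}{b^t}$ and $s\beta\equiv-\frac{a}{b-1}\pmod 1$. (3) If $s>1$ and $s\nmid d$ for some $d\in D$, then for every $(\alpha,\beta)$ for which there are no integers $a,r,t$ with $s\alpha\equiv\frac{a}{b-1}+\frac{r}{b^t}$ and $s\beta\equiv-\frac{a}{b-1}\pmod 1$, the limit exists and equals $0$. Finally, if at least one of $\alpha,\beta$ is irrational, then $$\lim_{N-M\to\infty}\frac{1}{N-M}\sum_{M<n\le N}e(k_n\alpha+s_b(k_n)\beta)=0,$$ i.e. for every $\eta>0$ there is $L$ such that the average has modulus $<\eta$ whenever $0\le M<N$ and $N-M\ge L$.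
   Context: $\mathcal C_{b,D}=\{\sum_{j=0}^{k} d_j b^j : k\in\mathbb N_0,\ d_j\in D\}$. $s_b(k)$ is the base-$b$ sum of digits of $k$. $e(x)=e^{2\pi i x}$. The number $s$ is the largest integer such that $D$ is contained in an arithmetic progression of step $s$. *)

theory Defs
  imports "HOL-Analysis.Analysis" "HOL-Library.Infinite_Set"
begin

function digsum :: "nat \<Rightarrow> nat \<Rightarrow> nat" where
  "digsum b n = (if b \<le> 1 \<or> n = 0 then 0 else n mod b + digsum b (n div b))"
  by auto
termination
  by (relation "Wellfounded.measure snd") auto

declare digsum.simps [simp del]

definition e :: "real \<Rightarrow> complex" where
  "e x = exp (2 * complex_of_real pi * \<i> * complex_of_real x)"

definition Cset :: "nat \<Rightarrow> nat set \<Rightarrow> nat set" where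
  "Cset b D = {n. \<exists>k::nat. \<exists>d::nat \<Rightarrow> nat. (\<forall>j\<le>k. d j \<in> D) \<and> n = (\<Sum>j\<le>k. d j * b ^ j)}"

definition kseq :: "nat \<Rightarrow> nat set \<Rightarrow> nat \<Rightarrow> nat" where
  "kseq b D n = enumerate (Cset b D) (n - 1)"

definition sD :: "nat set \<Rightarrow> int" where
  "sD D = Gcd {int d - int d' | d d'. d \<in> D \<and> d' \<in> D}"

definition term_e :: "nat \<Rightarrow> nat set \<Rightarrow> real \<Rightarrow> real \<Rightarrow> nat \<Rightarrow> complex" where
  "term_e b D \<alpha> \<beta> n = e (real (kseq b D n) * \<alpha> + real (digsum b (kseq b D n)) * \<beta>)"

definition avgC :: "nat \<Rightarrow> nat set \<Rightarrow> real \<Rightarrow> real \<Rightarrow> nat \<Rightarrow> complex" where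
  "avgC b D \<alpha> \<beta> N = (\<Sum>n=1..N. term_e b D \<alpha> \<beta> n) / of_nat N"

definition cong1 :: "real \<Rightarrow> real \<Rightarrow> bool" where
  "cong1 x y \<longleftrightarrow> x - y \<in> \<int>"

definition exceptional :: "nat \<Rightarrow> int \<Rightarrow> real \<Rightarrow> real \<Rightarrow> bool" where
  "exceptional b c \<alpha> \<beta> \<longleftrightarrow>
     (\<exists>a r t :: int. cong1 (of_int c * \<alpha>) (of_int a / (real b - 1) + of_int r / (real b powi t))
                  \<and> cong1 (of_int c * \<beta>) (- of_int a / (real b - 1)))"

end

theory Submission
  imports Defs
begin

text \<open>
  Let m = |D| and phi(x) = (1/m) sum_{d in D} e(d x). The n-th element of C_{b,D} is obtained by
  writing n in base m (in bijective base m when 0 is not a digit) and replacing the base-m digits by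
  the elements of D. Grouping the indices into blocks of m consecutive ones therefore turns a sum of
  e(k alpha + s_b(k) beta) over L consecutive k in C_{b,D} into m phi(alpha + beta) times a sum of
  length about L/m for the parameters (b alpha, beta), up to O(m) boundary terms. Iterating t times,
  the averages are O(m^t / L) + prod_{j<t} |phi(b^j alpha + beta)|, uniformly in the position of
  the window.

  If the product does not tend to 0, then |phi(b^j alpha + beta)| tends to 1, so
  e((d - d')(b^j alpha + beta)) tends to 1 for all digits d, d', and by Bezout so does
  z_j = e(s (b^j alpha + beta)). As z_{j+1} = z_j^b up to a constant factor, z_j is eventually 1:
  s (b^j alpha + beta) is eventually an integer, which makes (alpha, beta) exceptional and both
  rational. If s divides every digit, the summands are then eventually periodic, so their Cesaro
  means converge.
\<close>

lemma enumerate_range_strict_mono: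
  fixes f :: "nat \<Rightarrow> nat"
  assumes "strict_mono f"
  shows "enumerate (range f) n = f n"
  using assms
proof (induction n arbitrary: f)
  case 0
  then show ?case
    by (auto simp: enumerate_0 strict_mono_less_eq intro!: Least_equality)
next
  case (Suc n)
  have "enumerate (range f) 0 = f 0"
    using Suc.prems by (auto simp: enumerate_0 strict_mono_less_eq intro!: Least_equality)
  moreover have "range f - {f 0} = range (f \<circ> Suc)"
    using Suc.prems by (auto simp: strict_mono_eq image_iff) (metis not0_implies_Suc)
  moreover have "strict_mono (f \<circ> Suc)"
    using Suc.prems by (simp add: strict_mono_def)
  ultimately show ?case
    using Suc.IH[of "f \<circ> Suc"] by (simp add: enumerate_Suc' comp_def)
qed

lemma e_add: "e (x + y) = e x * e y"
  unfolding e_def by (simp add: distrib_left distrib_right exp_add)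

lemma norm_e [simp]: "norm (e x) = 1"
  unfolding e_def by simp

lemma e_0 [simp]: "e 0 = 1"
  by (simp add: e_def)

lemma e_eq_1_iff: "e x = 1 \<longleftrightarrow> x \<in> \<int>"
proof -
  have "e x = 1 \<longleftrightarrow> (\<exists>n::int. 2 * pi * x = of_int (2 * n) * pi)"
    unfolding e_def exp_eq_1 by simp
  also have "\<dots> \<longleftrightarrow> (\<exists>n::int. x = of_int n)"
    by (auto simp: algebra_simps)
  also have "\<dots> \<longleftrightarrow> x \<in> \<int>"
    by (auto simp: Ints_def)
  finally show ?thesis .
qed

lemma e_of_int_mult: "e (of_int k * x) = e x powi k"
  unfolding e_def by (simp add: exp_power_int mult_ac)

lemma e_of_nat_mult: "e (of_nat k * x) = e x ^ k"
  using e_of_int_mult[of "int k" x] by simp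

lemma digsum_0 [simp]: "digsum b 0 = 0"
  by (simp add: digsum.simps)

lemma digsum_add_mult:
  assumes "b \<ge> 2" "x < b"
  shows "digsum b (x + b * y) = x + digsum b y"
proof (cases "x + b * y = 0")
  case True
  then have "x = 0" "y = 0"
    using assms by auto
  then show ?thesis by simp
next
  case False
  then show ?thesis
    using assms by (simp add: digsum.simps[of b "x + b * y"])
qed

lemma Cset_digit: "d \<in> D \<Longrightarrow> d \<in> Cset b D"
  unfolding Cset_def by (intro CollectI exI[of _ 0] exI[of _ "\<lambda>_. d"]) simp

lemma Cset_step:
  assumes "d \<in> D" "y \<in> Cset b D"
  shows "d + b * y \<in> Cset b D"
proof -
  obtain k ds where ds: "\<forall>j\<le>k. ds j \<in> D" "y = (\<Sum>j\<le>k. ds j * b ^ j)"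
    using assms(2) unfolding Cset_def by blast
  define ds' where "ds' j = (if j = 0 then d else ds (j - 1))" for j
  have "d + b * y = (\<Sum>j\<le>Suc k. ds' j * b ^ j)"
    unfolding ds(2) ds'_def sum.atMost_Suc_shift by (simp add: sum_distrib_left mult_ac)
  moreover have "\<forall>j\<le>Suc k. ds' j \<in> D"
    using assms(1) ds(1) by (auto simp: ds'_def)
  ultimately show ?thesis
    unfolding Cset_def by blast
qed

lemma Cset_induct [consumes 1, case_names digit step]:
  assumes "x \<in> Cset b D"
    and "\<And>d. d \<in> D \<Longrightarrow> P d"
    and "\<And>d y. d \<in> D \<Longrightarrow> P y \<Longrightarrow> P (d + b * y)"
  shows "P x"
proof -
  obtain k ds where "\<forall>j\<le>k. ds j \<in> D" "x = (\<Sum>j\<le>k. ds j * b ^ j)"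
    using assms(1) unfolding Cset_def by blast
  then show ?thesis
  proof (induction k arbitrary: ds x)
    case 0
    then show ?case using assms(2) by simp
  next
    case (Suc k)
    have "x = ds 0 + b * (\<Sum>j\<le>k. ds (Suc j) * b ^ j)"
      unfolding Suc.prems(2) sum.atMost_Suc_shift by (simp add: sum_distrib_left mult_ac)
    then show ?case
      using Suc assms(3) by simp
  qed
qed

lemma tendsto_1_if_prod_not_tendsto_0:
  fixes a :: "nat \<Rightarrow> real"
  assumes "\<And>j. 0 \<le> a j" "\<And>j. a j \<le> 1" "\<not> (\<lambda>t. \<Prod>j<t. a j) \<longlonglongrightarrow> 0"
  shows "a \<longlonglongrightarrow> 1"
proof -
  define p where "p = (\<lambda>t. \<Prod>j<t. a j)"
  have p_nonneg: "p t \<ge> 0" for t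
    using assms(1) by (simp add: p_def prod_nonneg)
  have p_Suc: "p (Suc t) = p t * a t" for t
    by (simp add: p_def)
  have "decseq p"
    using p_nonneg assms(2) by (intro decseq_SucI) (simp add: p_Suc mult_left_le)
  then obtain P where P: "p \<longlonglongrightarrow> P" "\<And>t. P \<le> p t"
    using decseq_convergent[of p 0] p_nonneg by blast
  have "P \<noteq> 0"
    using P(1) assms(3) by (auto simp: p_def)
  moreover have "P \<ge> 0"
    using P(1) p_nonneg by (intro LIMSEQ_le_const[OF P(1)]) auto
  ultimately have "P > 0"
    by simp
  then have "(\<lambda>t. p (Suc t) / p t) \<longlonglongrightarrow> P / P"
    using P(1) by (intro tendsto_divide LIMSEQ_Suc) auto
  moreover have "p (Suc t) / p t = a t" for t
    using P(2)[of t] \<open>P > 0\<close> by (simp add: p_Suc)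
  ultimately show ?thesis
    using \<open>P > 0\<close> by simp
qed

lemma unimodular_tendsto_1:
  fixes w :: "nat \<Rightarrow> complex"
  assumes "\<And>j. norm (w j) = 1" "(\<lambda>j. norm (1 + w j)) \<longlonglongrightarrow> 2"
  shows "w \<longlonglongrightarrow> 1"
proof -
  have "norm (w j - 1) = sqrt (4 - norm (1 + w j) ^ 2)" for j
  proof -
    have "Re (w j) ^ 2 + Im (w j) ^ 2 = 1"
      using assms(1)[of j] cmod_power2[of "w j"] by simp
    moreover have "norm (w j - 1) ^ 2 = (Re (w j) - 1) ^ 2 + Im (w j) ^ 2"
      by (simp add: cmod_power2)
    moreover have "norm (1 + w j) ^ 2 = (1 + Re (w j)) ^ 2 + Im (w j) ^ 2"
      by (simp add: cmod_power2)
    ultimately have "norm (w j - 1) ^ 2 = 4 - norm (1 + w j) ^ 2"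
      by (simp add: power2_eq_square algebra_simps)
    then show ?thesis
      by (simp add: real_sqrt_unique)
  qed
  moreover have "(\<lambda>j. sqrt (4 - norm (1 + w j) ^ 2)) \<longlonglongrightarrow> sqrt (4 - 2 ^ 2)"
    using assms(2) by (intro tendsto_intros)
  ultimately have "(\<lambda>j. norm (w j - 1)) \<longlonglongrightarrow> 0"
    by simp
  then show ?thesis
    by (simp add: tendsto_norm_zero_iff LIM_zero_iff)
qed

lemma e_Gcd_mult_tendsto_1:
  assumes "finite K" "\<And>k. k \<in> K \<Longrightarrow> (\<lambda>j. e (of_int k * y j)) \<longlonglongrightarrow> 1"
  shows "(\<lambda>j. e (of_int (Gcd K) * y j)) \<longlonglongrightarrow> 1"
  using assms
proof (induction K rule: finite_induct)
  case empty
  then show ?case by simp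
next
  case (insert k K)
  obtain u v where uv: "u * k + v * Gcd K = Gcd (insert k K)"
    using bezout_int by (metis Gcd_insert)
  have "e (of_int (Gcd (insert k K)) * y j) = e (of_int k * y j) powi u * e (of_int (Gcd K) * y j) powi v" for j
    unfolding uv[symmetric] by (simp add: e_of_int_mult[symmetric] algebra_simps flip: e_add)
  moreover have "(\<lambda>j. e (of_int k * y j) powi u * e (of_int (Gcd K) * y j) powi v) \<longlonglongrightarrow> 1 powi u * 1 powi v"
    using insert by (intro tendsto_intros) auto
  ultimately show ?case
    by simp
qed

lemma power_iterates_eventually_1:
  fixes z :: "nat \<Rightarrow> complex"
  assumes "b \<ge> 2" "\<And>j. z (Suc j) = z j ^ b" "z \<longlonglongrightarrow> 1"
  shows "\<exists>J. \<forall>j\<ge>J. z j = 1"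
proof -
  have "(\<lambda>j. norm (\<Sum>i<b. z j ^ i)) \<longlonglongrightarrow> norm (\<Sum>i<b. (1::complex) ^ i)"
    using assms(3) by (intro tendsto_intros)
  then have "\<forall>\<^sub>F j in sequentially. 1 < norm (\<Sum>i<b. z j ^ i)"
    using assms(1) by (intro order_tendstoD(1)) auto
  then obtain J where J: "\<And>j. J \<le> j \<Longrightarrow> 1 \<le> norm (\<Sum>i<b. z j ^ i)"
    unfolding eventually_sequentially by (meson less_imp_le)
  define a where "a n = norm (z (J + n) - 1)" for n
  have "incseq a"
  proof (rule incseq_SucI)
    fix n
    have "z (Suc (J + n)) - 1 = (z (J + n) - 1) * (\<Sum>i<b. z (J + n) ^ i)"
      unfolding assms(2) by (rule power_diff_1_eq)
    then have "a (Suc n) = a n * norm (\<Sum>i<b. z (J + n) ^ i)"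
      by (simp add: a_def norm_mult)
    then show "a n \<le> a (Suc n)"
      using J[of "J + n"] by (simp add: a_def mult_le_cancel_left1)
  qed
  moreover have "a \<longlonglongrightarrow> 0"
    unfolding a_def using LIMSEQ_ignore_initial_segment[OF assms(3), of J]
    by (simp add: tendsto_norm_zero_iff LIM_zero_iff add.commute)
  ultimately have "a n \<le> 0" for n
    by (rule incseq_le)
  then have "z (J + n) = 1" for n
    by (simp add: a_def)
  then show ?thesis
    by (metis le_add_diff_inverse)
qed

lemma Ints_mult_if_consecutive_Ints:
  assumes "x * (real b ^ J * \<alpha> + \<beta>) \<in> \<int>" "x * (real b ^ Suc J * \<alpha> + \<beta>) \<in> \<int>"
  shows "(real b - 1) * (x * \<beta>) \<in> \<int>"
proof -
  have "(real b - 1) * (x * \<beta>) = of_nat b * (x * (real b ^ J * \<alpha> + \<beta>)) - x * (real b ^ Suc J * \<alpha> + \<beta>)"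
    by (simp add: algebra_simps)
  then show ?thesis
    using assms by simp
qed

lemma exceptional_if_consecutive_Ints:
  assumes "b \<ge> 2"
    and "of_int c * (real b ^ J * \<alpha> + \<beta>) \<in> \<int>" "of_int c * (real b ^ Suc J * \<alpha> + \<beta>) \<in> \<int>"
  shows "exceptional b c \<alpha> \<beta>"
proof -
  obtain n where n: "(real b - 1) * (of_int c * \<beta>) = of_int n"
    using Ints_mult_if_consecutive_Ints[OF assms(2,3)] by (auto elim: Ints_cases)
  obtain N where N: "of_int c * (real b ^ J * \<alpha> + \<beta>) = of_int N"
    using assms(2) by (auto elim: Ints_cases)
  define G where "G = (\<Sum>i<J. int b ^ i)"
  have G: "real b ^ J = 1 + (real b - 1) * of_int G"
    using power_diff_1_eq[of "real b" J] by (simp add: G_def)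
  have pos: "real b - 1 > 0" "real b ^ J > 0"
    using assms(1) by auto
  have \<beta>: "of_int c * \<beta> = - of_int (- n) / (real b - 1)"
    using n pos by (simp add: field_simps)
  have "of_int c * \<alpha> = of_int (- n) / (real b - 1) + of_int (N + n * G) / real b powi int J"
  proof -
    have "of_int c * \<alpha> * real b ^ J = of_int N - of_int n / (real b - 1)"
      using N \<beta> by (simp add: algebra_simps)
    also have "\<dots> = (of_int (N + n * G) - of_int n / (real b - 1) * real b ^ J)"
      using pos unfolding G by (simp add: field_simps)
    finally show ?thesis
      using pos by (simp add: field_simps)
  qed
  with \<beta> show ?thesis
    unfolding exceptional_def cong1_def by (intro exI[of _ "- n"] exI[of _ "N + n * G"] exI[of _ "int J"]) simp
qed

lemma rational_if_consecutive_Ints: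
  assumes "b \<ge> 2" "c \<noteq> 0"
    and "of_int c * (real b ^ J * \<alpha> + \<beta>) \<in> \<int>" "of_int c * (real b ^ Suc J * \<alpha> + \<beta>) \<in> \<int>"
  shows "\<alpha> \<in> \<rat> \<and> \<beta> \<in> \<rat>"
proof -
  obtain n where n: "(real b - 1) * (of_int c * \<beta>) = of_int n"
    using Ints_mult_if_consecutive_Ints[OF assms(3,4)] by (auto elim: Ints_cases)
  obtain N where N: "of_int c * (real b ^ J * \<alpha> + \<beta>) = of_int N"
    using assms(3) by (auto elim: Ints_cases)
  have pos: "real b - 1 > 0" "real b ^ J > 0"
    using assms(1) by auto
  have "\<beta> = of_int n / ((real b - 1) * of_int c)"
    using n pos assms(2) by (simp add: field_simps)
  moreover have "\<alpha> = (of_int N - of_int c * \<beta>) / (of_int c * real b ^ J)"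
    using N pos assms(2) by (simp add: field_simps)
  ultimately show ?thesis
    by simp
qed

lemma eventually_periodic_bounded:
  fixes g :: "nat \<Rightarrow> 'a::real_normed_vector"
  assumes "p > 0" "\<And>n. N0 \<le> n \<Longrightarrow> g (n + p) = g n"
  shows "\<exists>B. \<forall>n. norm (g n) \<le> B"
proof -
  define B where "B = Max ((\<lambda>n. norm (g n)) ` {..<N0 + p})"
  have "norm (g n) \<le> B" for n
  proof (induction n rule: less_induct)
    case (less n)
    show ?case
    proof (cases "n < N0 + p")
      case True
      then show ?thesis by (simp add: B_def)
    next
      case False
      then have "g n = g (n - p)" and "n - p < n"
        using assms assms(2)[of "n - p"] by auto
      then show ?thesis
        using less.IH by simp
    qed
  qed
  then show ?thesis by blast
qed

lemma sum_period_eventually_const: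
  fixes f :: "nat \<Rightarrow> 'a::cancel_comm_monoid_add"
  assumes "\<And>n. N0 \<le> n \<Longrightarrow> f (n + p) = f n" "N0 \<le> n"
  shows "(\<Sum>k<p. f (n + k)) = (\<Sum>k<p. f (N0 + k))"
  using assms(2)
proof (induction n rule: dec_induct)
  case (step i)
  have "(\<Sum>k<p. f (i + k)) + f (i + p) = (\<Sum>k<Suc p. f (i + k))"
    by simp
  also have "\<dots> = f i + (\<Sum>k<p. f (Suc i + k))"
    unfolding sum.lessThan_Suc_shift by simp
  finally show ?case
    using step assms(1)[OF step.hyps(1)] by (simp add: add.commute)
qed simp

lemma convergent_Cesaro_eventually_periodic:
  fixes f :: "nat \<Rightarrow> 'a::real_normed_field"
  assumes "p > 0" "\<And>n. N0 \<le> n \<Longrightarrow> f (n + p) = f n"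
  shows "convergent (\<lambda>N. (\<Sum>k<N. f k) / of_nat N)"
proof -
  define c where "c = (\<Sum>k<p. f (N0 + k)) / of_nat p"
  define G where "G N = (\<Sum>k<N. f k) - of_nat N * c" for N
  have "of_nat p \<noteq> (0::'a)"
    using assms(1) by simp
  have "G (N + p) = G N" if "N0 \<le> N" for N
  proof -
    have "(\<Sum>k<N + p. f k) = (\<Sum>k<N. f k) + (\<Sum>k<p. f (N + k))"
      by (induction p) (simp_all add: add.assoc)
    then show ?thesis
      using sum_period_eventually_const[of N0 f p N, OF assms(2) that] \<open>of_nat p \<noteq> 0\<close>
      by (simp add: G_def c_def field_simps)
  qed
  then obtain B where "\<And>N. norm (G N) \<le> B"
    using eventually_periodic_bounded[OF assms(1)] by blast
  then have "(\<lambda>N. G N / of_nat N) \<longlonglongrightarrow> 0"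
    by (intro Lim_null_comparison[OF _ lim_const_over_n[of B]]) (simp add: norm_divide divide_right_mono)
  then have "(\<lambda>N. c + G N / of_nat N) \<longlonglongrightarrow> c + 0"
    by (intro tendsto_add tendsto_const)
  moreover have "\<forall>\<^sub>F N in sequentially. c + G N / of_nat N = (\<Sum>k<N. f k) / of_nat N"
    by (intro eventually_sequentiallyI[of 1]) (simp add: G_def field_simps)
  ultimately have "(\<lambda>N. (\<Sum>k<N. f k) / of_nat N) \<longlonglongrightarrow> c + 0"
    by (rule Lim_transform_eventually)
  then show ?thesis
    by (auto simp: convergent_def)
qed

locale digit_set =
  fixes b :: nat and D :: "nat set"
  assumes base: "b \<ge> 2" and digits_less: "D \<subseteq> {..<b}" and card_digits: "card D \<ge> 2"
begin

definition m :: nat where "m = card D"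

definition digit :: "nat \<Rightarrow> nat" where "digit = enumerate D"

definition shift :: nat where "shift = (if 0 \<in> D then 0 else 1)"

lemma m_ge_2: "m \<ge> 2"
  using card_digits by (simp add: m_def)

text \<open>
  The increasing enumeration of C_{b,D} from index 0: replace each digit i of the base-m expansion
  of n by digit i and read the result in base b. If 0 is not a digit, the bijective base-m expansion
  of n + 1 (digits 1..m, with j replaced by digit (j - 1)) is used instead; shift accounts for this.
\<close>
function enum :: "nat \<Rightarrow> nat" where
  "enum n = (if n < m then digit n else digit (n mod m) + b * enum (n div m - shift))"
  by auto
termination
proof (relation "Wellfounded.measure id")
  fix n assume "\<not> n < m"
  then show "(n div m - shift, n) \<in> Wellfounded.measure id"
    using m_ge_2 by (simp add: le_less_trans[OF diff_le_self])
qed simp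

declare enum.simps [simp del]

lemma finite_digits: "finite D"
  using digits_less finite_nat_iff_bounded by blast

lemma bij_betw_digit: "bij_betw digit {..<m} D"
  using finite_digits by (simp add: m_def digit_def finite_bij_enumerate)

lemma digit_in: "i < m \<Longrightarrow> digit i \<in> D"
  using finite_digits by (simp add: m_def digit_def finite_enumerate_in_set)

lemma digit_less_base: "i < m \<Longrightarrow> digit i < b"
  using digit_in digits_less by blast

lemma digit_strict_mono: "i < j \<Longrightarrow> j < m \<Longrightarrow> digit i < digit j"
  using finite_digits by (simp add: m_def digit_def finite_enumerate_mono)

lemma digit_cases:
  assumes "d \<in> D"
  obtains i where "i < m" "d = digit i"
  using assms bij_betw_digit by (metis bij_betw_def imageE lessThan_iff)

lemma digit_0_eq_0: "0 \<in> D \<Longrightarrow> digit 0 = 0"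
  by (metis digit_cases digit_strict_mono gr0I not_less0)

lemma digit_pos: "0 \<notin> D \<Longrightarrow> i < m \<Longrightarrow> digit i > 0"
  using digit_in by (metis gr0I)

lemma shift_le_1: "shift \<le> 1"
  by (simp add: shift_def)

lemma enum_less: "n < m \<Longrightarrow> enum n = digit n"
  by (simp add: enum.simps)

lemma enum_step: "m \<le> n \<Longrightarrow> enum n = digit (n mod m) + b * enum (n div m - shift)"
  by (simp add: enum.simps[of n])

lemma enum_step_index_less: "m \<le> n \<Longrightarrow> n div m - shift < n"
  using m_ge_2 by (simp add: le_less_trans[OF diff_le_self])

lemma enum_block:
  assumes "shift \<le> q" "i < m"
  shows "enum (q * m + i) = digit i + b * enum (q - shift)"
proof (cases "q = 0")
  case True
  then have "0 \<in> D"
    using assms(1) by (simp add: shift_def split: if_splits)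
  then show ?thesis
    using True assms m_ge_2 by (simp add: enum_less digit_0_eq_0)
next
  case False
  then show ?thesis
    using assms by (simp add: enum_step trans_le_add1)
qed

lemma enum_less_Suc_within_block:
  assumes "Suc n mod m \<noteq> 0"
  shows "enum n < enum (Suc n)"
proof (cases "Suc n < m")
  case True
  then show ?thesis by (simp add: enum_less digit_strict_mono)
next
  case False
  define q where "q = Suc n div m"
  define i where "i = Suc n mod m"
  have i: "0 < i" "i < m"
    using assms m_ge_2 by (simp_all add: i_def)
  have q: "shift \<le> q"
    using False m_ge_2 shift_le_1 by (auto simp: q_def le_div_geq)
  have Suc_n: "Suc n = q * m + i"
    by (simp add: q_def i_def)
  then have n: "n = q * m + (i - 1)"
    using i by simp
  have "enum n = digit (i - 1) + b * enum (q - shift)"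
    unfolding n by (rule enum_block) (use q i in auto)
  also have "\<dots> < digit i + b * enum (q - shift)"
    using i digit_strict_mono[of "i - 1" i] by simp
  also have "\<dots> = enum (Suc n)"
    unfolding Suc_n using q i by (simp add: enum_block)
  finally show ?thesis .
qed

lemma enum_less_next_block:
  assumes "shift \<le> p" "enum (p - shift) < enum (Suc p - shift)"
  shows "enum (p * m + (m - 1)) < enum (Suc p * m)"
proof -
  have "enum (p * m + (m - 1)) = digit (m - 1) + b * enum (p - shift)"
    using assms(1) m_ge_2 by (intro enum_block) auto
  also have "\<dots> < b * (enum (p - shift) + 1)"
    using m_ge_2 digit_less_base[of "m - 1"] by simp
  also have "\<dots> \<le> b * enum (Suc p - shift)"
    using assms(2) by (intro mult_le_mono2) simp
  also have "\<dots> \<le> enum (Suc p * m)"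
    using enum_block[of "Suc p" 0] assms(1) m_ge_2 by simp
  finally show ?thesis .
qed

lemma enum_less_first_block:
  assumes "shift = 1"
  shows "enum (m - 1) < enum m"
proof -
  have "0 \<notin> D"
    using assms by (simp add: shift_def split: if_splits)
  then have "enum 0 \<ge> 1"
    using digit_pos[of 0] m_ge_2 by (simp add: enum_less)
  have "enum (m - 1) < b"
    using m_ge_2 by (simp add: enum_less digit_less_base)
  also have "\<dots> \<le> b * enum 0"
    using \<open>enum 0 \<ge> 1\<close> by simp
  also have "\<dots> \<le> enum (1 * m + 0)"
    using enum_block[of 1 0] assms m_ge_2 by simp
  finally show ?thesis
    by simp
qed

lemma enum_less_Suc: "enum n < enum (Suc n)"
proof (induction n rule: less_induct)
  case (less n)
  show ?case
  proof (cases "Suc n mod m = 0")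
    case False
    then show ?thesis by (rule enum_less_Suc_within_block)
  next
    case True
    then obtain c where "Suc n = c * m"
      by (metis dvd_eq_mod_eq_0 dvdE mult.commute)
    then obtain p where Suc_n: "Suc n = Suc p * m"
      by (cases c) auto
    then have n: "n = p * m + (m - 1)"
      using m_ge_2 by (simp add: algebra_simps)
    show ?thesis
    proof (cases "shift \<le> p")
      case True
      have "p \<le> p * m"
        using m_ge_2 by simp
      then have "p - shift < n"
        using n m_ge_2 by linarith
      then have "enum (p - shift) < enum (Suc p - shift)"
        using less.IH True by (simp add: Suc_diff_le)
      then show ?thesis
        unfolding Suc_n unfolding n by (rule enum_less_next_block[OF True])
    next
      case False
      then have "p = 0" "shift = 1"
        using shift_le_1 by auto
      then have "Suc n = m"
        using Suc_n by simp
      then show ?thesis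
        using enum_less_first_block[OF \<open>shift = 1\<close>] by (metis diff_Suc_1)
    qed
  qed
qed

lemma strict_mono_enum: "strict_mono enum"
  by (simp add: strict_mono_Suc_iff enum_less_Suc)

lemma enum_in_Cset: "enum n \<in> Cset b D"
proof (induction n rule: less_induct)
  case (less n)
  show ?case
  proof (cases "n < m")
    case True
    then show ?thesis by (simp add: enum_less digit_in Cset_digit)
  next
    case False
    then show ?thesis
      using less.IH enum_step_index_less m_ge_2 by (simp add: enum_step Cset_step digit_in)
  qed
qed

lemma Cset_in_range_enum: "x \<in> Cset b D \<Longrightarrow> x \<in> range enum"
proof (induction x rule: Cset_induct)
  case (digit d)
  then obtain i where "i < m" "d = digit i"
    by (rule digit_cases)
  then show ?case
    by (metis enum_less rangeI)
next
  case (step d y)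
  then obtain i n where "i < m" "d = digit i" "y = enum n"
    by (metis digit_cases imageE)
  then have "d + b * y = enum ((n + shift) * m + i)"
    by (simp add: enum_block)
  then show ?case by simp
qed

lemma range_enum: "range enum = Cset b D"
  using enum_in_Cset Cset_in_range_enum by blast

lemma kseq_Suc: "kseq b D (Suc n) = enum n"
  using enumerate_range_strict_mono[OF strict_mono_enum] by (simp add: kseq_def flip: range_enum)

definition term_enum :: "real \<Rightarrow> real \<Rightarrow> nat \<Rightarrow> complex" where
  "term_enum \<alpha> \<beta> n = e (real (enum n) * \<alpha> + real (digsum b (enum n)) * \<beta>)"

definition digit_mean :: "real \<Rightarrow> complex" where
  "digit_mean x = (\<Sum>d\<in>D. e (real d * x)) / of_nat m"

definition window_sum :: "real \<Rightarrow> real \<Rightarrow> nat \<Rightarrow> nat \<Rightarrow> complex" where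
  "window_sum \<alpha> \<beta> M L = (\<Sum>k<L. term_enum \<alpha> \<beta> (M + k))"

lemma term_e_Suc: "term_e b D \<alpha> \<beta> (Suc n) = term_enum \<alpha> \<beta> n"
  by (simp add: term_e_def term_enum_def kseq_Suc)

lemma norm_term_enum [simp]: "norm (term_enum \<alpha> \<beta> n) = 1"
  by (simp add: term_enum_def)

lemma sum_e_digit: "(\<Sum>i<m. e (real (digit i) * x)) = of_nat m * digit_mean x"
  using sum.reindex_bij_betw[OF bij_betw_digit, of "\<lambda>d. e (real d * x)"] m_ge_2
  by (simp add: digit_mean_def)

lemma norm_digit_mean_le_1: "norm (digit_mean x) \<le> 1"
proof -
  have "norm (\<Sum>d\<in>D. e (real d * x)) \<le> of_nat m * 1"
    unfolding m_def by (rule sum_norm_bound) simp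
  then show ?thesis
    using m_ge_2 by (simp add: digit_mean_def norm_divide)
qed

lemma term_enum_less: "n < m \<Longrightarrow> term_enum \<alpha> \<beta> n = e (real (digit n) * (\<alpha> + \<beta>))"
  using digsum_add_mult[OF base digit_less_base, of n 0]
  by (simp add: term_enum_def enum_less algebra_simps)

lemma term_enum_block:
  assumes "shift \<le> q" "i < m"
  shows "term_enum \<alpha> \<beta> (q * m + i) = e (real (digit i) * (\<alpha> + \<beta>)) * term_enum (real b * \<alpha>) \<beta> (q - shift)"
proof -
  have enum_eq: "enum (q * m + i) = digit i + b * enum (q - shift)"
    using assms by (rule enum_block)
  then have "digsum b (enum (q * m + i)) = digit i + digsum b (enum (q - shift))"
    using assms by (simp add: digsum_add_mult[OF base digit_less_base])
  then have "real (enum (q * m + i)) * \<alpha> + real (digsum b (enum (q * m + i))) * \<beta>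
      = real (digit i) * (\<alpha> + \<beta>) + (real (enum (q - shift)) * (real b * \<alpha>) + real (digsum b (enum (q - shift))) * \<beta>)"
    using enum_eq by (simp add: algebra_simps)
  then show ?thesis
    by (simp add: term_enum_def e_add)
qed

lemma term_enum_step:
  assumes "m \<le> n"
  shows "term_enum \<alpha> \<beta> n = e (real (digit (n mod m)) * (\<alpha> + \<beta>)) * term_enum (real b * \<alpha>) \<beta> (n div m - shift)"
proof -
  have "shift \<le> n div m"
    using assms m_ge_2 shift_le_1 by (auto simp: le_div_geq)
  then show ?thesis
    using term_enum_block[of "n div m" "n mod m"] m_ge_2 by simp
qed

lemma norm_window_sum_le: "norm (window_sum \<alpha> \<beta> M L) \<le> real L"
  using sum_norm_bound[of "{..<L}" "\<lambda>k. term_enum \<alpha> \<beta> (M + k)" 1] by (simp add: window_sum_def)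

lemma window_sum_add:
  "window_sum \<alpha> \<beta> M (L1 + L2) = window_sum \<alpha> \<beta> M L1 + window_sum \<alpha> \<beta> (M + L1) L2"
  by (induction L2) (simp_all add: window_sum_def add.assoc)

lemma window_sum_block:
  assumes "shift \<le> q"
  shows "window_sum \<alpha> \<beta> (q * m) m = of_nat m * digit_mean (\<alpha> + \<beta>) * term_enum (real b * \<alpha>) \<beta> (q - shift)"
proof -
  have "window_sum \<alpha> \<beta> (q * m) m = (\<Sum>i<m. e (real (digit i) * (\<alpha> + \<beta>)) * term_enum (real b * \<alpha>) \<beta> (q - shift))"
    unfolding window_sum_def using assms by (intro sum.cong refl) (simp add: term_enum_block)
  then show ?thesis
    by (simp add: sum_e_digit flip: sum_distrib_right)
qed

lemma window_sum_blocks: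
  assumes "shift \<le> q"
  shows "window_sum \<alpha> \<beta> (q * m) (K * m) = of_nat m * digit_mean (\<alpha> + \<beta>) * window_sum (real b * \<alpha>) \<beta> (q - shift) K"
proof (induction K)
  case 0
  then show ?case by (simp add: window_sum_def)
next
  case (Suc K)
  have "window_sum \<alpha> \<beta> (q * m) (Suc K * m) = window_sum \<alpha> \<beta> (q * m) (K * m + m)"
    by (simp add: add.commute)
  also have "\<dots> = window_sum \<alpha> \<beta> (q * m) (K * m) + window_sum \<alpha> \<beta> ((q + K) * m) m"
    by (simp add: window_sum_add add_mult_distrib)
  also have "\<dots> = of_nat m * digit_mean (\<alpha> + \<beta>) *
      (window_sum (real b * \<alpha>) \<beta> (q - shift) K + term_enum (real b * \<alpha>) \<beta> (q - shift + K))"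
    using assms by (simp add: Suc.IH window_sum_block distrib_left)
  also have "\<dots> = of_nat m * digit_mean (\<alpha> + \<beta>) * window_sum (real b * \<alpha>) \<beta> (q - shift) (Suc K)"
    by (simp add: window_sum_def)
  finally show ?case .
qed

lemma window_sum_decompose:
  assumes "m \<le> L"
  obtains q A K C where "shift \<le> q" "A \<le> m" "C < m" "L = A + K * m + C"
    "window_sum \<alpha> \<beta> M L = window_sum \<alpha> \<beta> M A + window_sum \<alpha> \<beta> (q * m) (K * m) + window_sum \<alpha> \<beta> (q * m + K * m) C"
proof -
  define q where "q = M div m + 1"
  define A where "A = q * m - M"
  define K where "K = (L - A) div m"
  define C where "C = (L - A) mod m"
  have "M < q * m"
    using m_ge_2 by (simp add: q_def dividend_less_div_times)
  moreover have "q * m \<le> M + m"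
    by (simp add: q_def add.commute)
  ultimately have A: "M + A = q * m" "A \<le> m"
    unfolding A_def by linarith+
  have L: "L = A + K * m + C"
    using assms A by (simp add: K_def C_def)
  have "M + (A + K * m) = q * m + K * m"
    using A(1) by simp
  then have "window_sum \<alpha> \<beta> M L = window_sum \<alpha> \<beta> M A + window_sum \<alpha> \<beta> (q * m) (K * m) + window_sum \<alpha> \<beta> (q * m + K * m) C"
    by (simp only: L window_sum_add A(1))
  moreover have "shift \<le> q" "C < m"
    using shift_le_1 m_ge_2 by (simp_all add: q_def C_def)
  ultimately show ?thesis
    using that A(2) L by blast
qed

lemma window_sum_reduce:
  "\<exists>M' K. m * K \<le> L \<and>
     norm (window_sum \<alpha> \<beta> M L) \<le> 2 * m + m * norm (digit_mean (\<alpha> + \<beta>)) * norm (window_sum (real b * \<alpha>) \<beta> M' K)"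
proof (cases "m \<le> L")
  case False
  then have "norm (window_sum \<alpha> \<beta> M L) \<le> 2 * m"
    using norm_window_sum_le[of \<alpha> \<beta> M L] by linarith
  then show ?thesis
    by (intro exI[of _ 0]) (simp add: window_sum_def)
next
  case True
  then obtain q A K C where q: "shift \<le> q" and "A \<le> m" "C < m" "L = A + K * m + C"
    and split: "window_sum \<alpha> \<beta> M L = window_sum \<alpha> \<beta> M A + window_sum \<alpha> \<beta> (q * m) (K * m) + window_sum \<alpha> \<beta> (q * m + K * m) C"
    by (rule window_sum_decompose)
  have "norm (window_sum \<alpha> \<beta> M L) \<le> norm (window_sum \<alpha> \<beta> M A) + norm (window_sum \<alpha> \<beta> (q * m) (K * m))
      + norm (window_sum \<alpha> \<beta> (q * m + K * m) C)"
    unfolding split by (intro order_trans[OF norm_triangle_ineq] add_mono norm_triangle_ineq order_refl)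
  also have "\<dots> \<le> A + m * norm (digit_mean (\<alpha> + \<beta>)) * norm (window_sum (real b * \<alpha>) \<beta> (q - shift) K) + C"
    by (intro add_mono norm_window_sum_le) (simp add: window_sum_blocks[OF q] norm_mult)
  also have "\<dots> \<le> 2 * m + m * norm (digit_mean (\<alpha> + \<beta>)) * norm (window_sum (real b * \<alpha>) \<beta> (q - shift) K)"
    using \<open>A \<le> m\<close> \<open>C < m\<close> by simp
  finally show ?thesis
    using \<open>L = A + K * m + C\<close> by (intro exI[of _ "q - shift"] exI[of _ K]) simp
qed

lemma window_sum_bound_step:
  fixes B P :: real
  assumes "\<And>M L. norm (window_sum (real b * \<alpha>) \<beta> M L) \<le> B + L * P" "B \<ge> 0" "P \<ge> 0"
  shows "norm (window_sum \<alpha> \<beta> M L) \<le> (2 * m + m * B) + L * (norm (digit_mean (\<alpha> + \<beta>)) * P)"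
proof -
  define \<phi> where "\<phi> = norm (digit_mean (\<alpha> + \<beta>))"
  have \<phi>: "0 \<le> \<phi>" "\<phi> \<le> 1"
    using norm_digit_mean_le_1 by (auto simp: \<phi>_def)
  obtain M' K where "m * K \<le> L"
    and reduce: "norm (window_sum \<alpha> \<beta> M L) \<le> 2 * m + m * \<phi> * norm (window_sum (real b * \<alpha>) \<beta> M' K)"
    using window_sum_reduce unfolding \<phi>_def by blast
  have "m * \<phi> * norm (window_sum (real b * \<alpha>) \<beta> M' K) \<le> m * \<phi> * (B + K * P)"
    using assms(1) \<phi> by (simp add: mult_left_mono)
  also have "\<dots> = m * (\<phi> * B) + \<phi> * (real m * real K) * P"
    by (simp add: algebra_simps)
  also have "\<dots> \<le> m * B + \<phi> * L * P"
  proof -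
    have "m * (\<phi> * B) \<le> m * B"
      using \<phi> \<open>B \<ge> 0\<close> by (simp add: mult_left_le_one_le mult_left_mono)
    moreover have "real m * real K \<le> real L"
      using \<open>m * K \<le> L\<close> by (metis of_nat_le_iff of_nat_mult)
    then have "\<phi> * (real m * real K) * P \<le> \<phi> * L * P"
      using \<phi>(1) \<open>P \<ge> 0\<close> by (intro mult_right_mono mult_left_mono)
    ultimately show ?thesis
      by linarith
  qed
  finally show ?thesis
    using reduce by (simp add: \<phi>_def mult_ac)
qed

definition digit_mean_prod :: "real \<Rightarrow> real \<Rightarrow> nat \<Rightarrow> real" where
  "digit_mean_prod \<alpha> \<beta> t = (\<Prod>j<t. norm (digit_mean (real b ^ j * \<alpha> + \<beta>)))"

lemma digit_mean_prod_Suc: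
  "digit_mean_prod \<alpha> \<beta> (Suc t) = norm (digit_mean (\<alpha> + \<beta>)) * digit_mean_prod (real b * \<alpha>) \<beta> t"
  unfolding digit_mean_prod_def prod.lessThan_Suc_shift by (simp add: mult_ac)

lemma digit_mean_prod_nonneg: "digit_mean_prod \<alpha> \<beta> t \<ge> 0"
  by (simp add: digit_mean_prod_def prod_nonneg)

lemma window_sum_bound:
  "\<exists>B. \<forall>M L. norm (window_sum \<alpha> \<beta> M L) \<le> B + L * digit_mean_prod \<alpha> \<beta> t"
proof (induction t arbitrary: \<alpha>)
  case 0
  show ?case
    using norm_window_sum_le by (intro exI[of _ 0]) (simp add: digit_mean_prod_def)
next
  case (Suc t)
  obtain B where B: "\<And>M L. norm (window_sum (real b * \<alpha>) \<beta> M L) \<le> B + L * digit_mean_prod (real b * \<alpha>) \<beta> t"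
    using Suc.IH by blast
  have "B \<ge> 0"
    using B[of 0 0] by (simp add: window_sum_def)
  then show ?case
    using window_sum_bound_step[OF B _ digit_mean_prod_nonneg] by (auto simp: digit_mean_prod_Suc)
qed

lemma window_sum_small:
  fixes \<eta> :: real
  assumes "digit_mean_prod \<alpha> \<beta> \<longlonglongrightarrow> 0" "\<eta> > 0"
  shows "\<exists>L0>0. \<forall>M L. L0 \<le> L \<longrightarrow> norm (window_sum \<alpha> \<beta> M L) < \<eta> * L"
proof -
  obtain t where t: "digit_mean_prod \<alpha> \<beta> t < \<eta> / 2"
    using order_tendstoD(2)[OF assms(1), of "\<eta> / 2"] assms(2) by (auto simp: eventually_sequentially)
  obtain B where B: "\<And>M L. norm (window_sum \<alpha> \<beta> M L) \<le> B + L * digit_mean_prod \<alpha> \<beta> t"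
    using window_sum_bound by blast
  define L0 where "L0 = nat \<lceil>2 * B / \<eta>\<rceil> + 1"
  have "norm (window_sum \<alpha> \<beta> M L) < \<eta> * L" if "L0 \<le> L" for M L
  proof -
    have "2 * B / \<eta> < L"
      using that unfolding L0_def by linarith
    then have "B < \<eta> / 2 * L"
      using assms(2) by (simp add: field_simps)
    moreover have "L * digit_mean_prod \<alpha> \<beta> t \<le> \<eta> / 2 * L"
      using mult_left_mono[OF less_imp_le[OF t], of "real L"] by (simp add: mult.commute)
    ultimately show ?thesis
      using B[of M L] by linarith
  qed
  then show ?thesis
    by (intro exI[of _ L0]) (simp add: L0_def)
qed

lemma avgC_eq_window_sum: "avgC b D \<alpha> \<beta> N = window_sum \<alpha> \<beta> 0 N / of_nat N"
  by (simp add: avgC_def window_sum_def term_e_Suc sum.atLeast1_atMost_eq)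

lemma sum_term_e_eq_window_sum:
  assumes "M \<le> N"
  shows "(\<Sum>n\<in>{M<..N}. term_e b D \<alpha> \<beta> n) = window_sum \<alpha> \<beta> M (N - M)"
proof -
  have "(\<Sum>n\<in>{M<..M + L}. term_e b D \<alpha> \<beta> n) = window_sum \<alpha> \<beta> M L" for L
  proof (induction L)
    case (Suc L)
    have "{M<..M + Suc L} = insert (Suc (M + L)) {M<..M + L}"
      by auto
    then show ?case
      using Suc by (simp add: window_sum_def term_e_Suc)
  qed (simp add: window_sum_def)
  from this[of "N - M"] show ?thesis
    using assms by simp
qed

lemma avgC_tendsto_0:
  assumes "digit_mean_prod \<alpha> \<beta> \<longlonglongrightarrow> 0"
  shows "avgC b D \<alpha> \<beta> \<longlonglongrightarrow> 0"
proof (rule LIMSEQ_I)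
  fix \<eta> :: real
  assume "\<eta> > 0"
  then obtain L0 where "L0 > 0" and L0: "\<forall>M L. L0 \<le> L \<longrightarrow> norm (window_sum \<alpha> \<beta> M L) < \<eta> * L"
    using window_sum_small[OF assms \<open>\<eta> > 0\<close>] by blast
  have "norm (avgC b D \<alpha> \<beta> N) < \<eta>" if "L0 \<le> N" for N
  proof -
    have "norm (window_sum \<alpha> \<beta> 0 N) < \<eta> * N" "N > 0"
      using L0 \<open>L0 > 0\<close> that by auto
    then show ?thesis
      by (simp add: avgC_eq_window_sum norm_divide divide_less_eq)
  qed
  then show "\<exists>N0. \<forall>N\<ge>N0. norm (avgC b D \<alpha> \<beta> N - 0) < \<eta>"
    by auto
qed

lemma norm_digit_mean_le_pair:
  assumes "d \<in> D" "d' \<in> D" "d \<noteq> d'"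
  shows "m * norm (digit_mean y) \<le> norm (1 + e ((real d - real d') * y)) + (real m - 2)"
proof -
  let ?f = "\<lambda>c. e (real c * y)"
  let ?R = "D - {d} - {d'}"
  have "(\<Sum>c\<in>D. ?f c) = ?f d + (\<Sum>c\<in>D - {d}. ?f c)"
    using finite_digits assms(1) by (rule sum.remove)
  also have "(\<Sum>c\<in>D - {d}. ?f c) = ?f d' + (\<Sum>c\<in>?R. ?f c)"
    using assms finite_digits by (intro sum.remove) auto
  finally have "(\<Sum>c\<in>D. ?f c) = ?f d' * (1 + e ((real d - real d') * y)) + (\<Sum>c\<in>?R. ?f c)"
    by (simp add: algebra_simps flip: e_add)
  moreover have "card ?R = m - 2"
    using assms finite_digits by (simp add: m_def card_Diff_singleton)
  then have "norm (\<Sum>c\<in>?R. ?f c) \<le> real m - 2"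
    using sum_norm_bound[of ?R ?f 1] m_ge_2 by simp
  ultimately have "norm (\<Sum>c\<in>D. ?f c) \<le> norm (1 + e ((real d - real d') * y)) + (real m - 2)"
    using norm_triangle_ineq[of "?f d' * (1 + e ((real d - real d') * y))" "\<Sum>c\<in>?R. ?f c"]
    by (simp add: norm_mult)
  then show ?thesis
    using m_ge_2 by (simp add: digit_mean_def norm_divide)
qed

lemma e_digit_diff_tendsto_1:
  assumes "(\<lambda>j. norm (digit_mean (y j))) \<longlonglongrightarrow> 1" "d \<in> D" "d' \<in> D"
  shows "(\<lambda>j. e ((real d - real d') * y j)) \<longlonglongrightarrow> 1"
proof (cases "d = d'")
  case False
  have "(\<lambda>j. real m * norm (digit_mean (y j)) - (real m - 2)) \<longlonglongrightarrow> real m * 1 - (real m - 2)"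
    using assms(1) by (intro tendsto_intros)
  then have lower: "(\<lambda>j. real m * norm (digit_mean (y j)) - (real m - 2)) \<longlonglongrightarrow> 2"
    by simp
  have "\<forall>j. real m * norm (digit_mean (y j)) - (real m - 2) \<le> norm (1 + e ((real d - real d') * y j))"
  proof
    fix j
    show "real m * norm (digit_mean (y j)) - (real m - 2) \<le> norm (1 + e ((real d - real d') * y j))"
      using norm_digit_mean_le_pair[OF assms(2,3) False, of "y j"] by linarith
  qed
  moreover have "\<forall>j. norm (1 + e ((real d - real d') * y j)) \<le> 2"
    using norm_triangle_ineq[of 1] by (metis norm_e norm_one one_add_one)
  ultimately have "(\<lambda>j. norm (1 + e ((real d - real d') * y j))) \<longlonglongrightarrow> 2"
    by (intro tendsto_sandwich[OF always_eventually always_eventually lower tendsto_const])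
  then show ?thesis
    by (intro unimodular_tendsto_1) simp_all
qed simp

lemma e_sD_mult_tendsto_1:
  assumes "(\<lambda>j. norm (digit_mean (y j))) \<longlonglongrightarrow> 1"
  shows "(\<lambda>j. e (of_int (sD D) * y j)) \<longlonglongrightarrow> 1"
  unfolding sD_def
proof (rule e_Gcd_mult_tendsto_1)
  have "{int d - int d' | d d'. d \<in> D \<and> d' \<in> D} = (\<lambda>(d, d'). int d - int d') ` (D \<times> D)"
    by auto
  then show "finite {int d - int d' | d d'. d \<in> D \<and> d' \<in> D}"
    using finite_digits by simp
next
  fix k assume "k \<in> {int d - int d' | d d'. d \<in> D \<and> d' \<in> D}"
  then show "(\<lambda>j. e (of_int k * y j)) \<longlonglongrightarrow> 1"
    using e_digit_diff_tendsto_1[OF assms] by auto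
qed

lemma sD_Ints_eventually:
  assumes "\<not> digit_mean_prod \<alpha> \<beta> \<longlonglongrightarrow> 0"
  shows "\<exists>J. \<forall>j\<ge>J. of_int (sD D) * (real b ^ j * \<alpha> + \<beta>) \<in> \<int>"
proof -
  define s where "s = real_of_int (sD D)"
  define z where "z j = e (s * (real b ^ j * \<alpha> + \<beta>))" for j
  have "(\<lambda>j. norm (digit_mean (real b ^ j * \<alpha> + \<beta>))) \<longlonglongrightarrow> 1"
    using assms norm_digit_mean_le_1 unfolding digit_mean_prod_def[abs_def]
    by (intro tendsto_1_if_prod_not_tendsto_0) simp_all
  then have z: "z \<longlonglongrightarrow> 1"
    unfolding z_def s_def by (rule e_sD_mult_tendsto_1)
  define c where "c = e (- (real b - 1) * s * \<beta>)"
  have z_Suc: "z (Suc j) = z j ^ b * c" for j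
  proof -
    have "s * (real b ^ Suc j * \<alpha> + \<beta>) = real b * (s * (real b ^ j * \<alpha> + \<beta>)) + (- (real b - 1) * s * \<beta>)"
      by (simp add: algebra_simps)
    then show ?thesis
      by (simp add: z_def c_def e_add e_of_nat_mult)
  qed
  have "(\<lambda>j. z (Suc j) / z j ^ b) \<longlonglongrightarrow> 1 / 1 ^ b"
    using tendsto_divide[OF LIMSEQ_Suc[OF z] tendsto_power[OF z]] by simp
  moreover have "z j \<noteq> 0" for j
    by (metis norm_e norm_zero zero_neq_one z_def)
  then have "z (Suc j) / z j ^ b = c" for j
    by (simp add: z_Suc)
  ultimately have "c = 1"
    by (simp add: LIMSEQ_const_iff)
  then obtain J where "\<forall>j\<ge>J. z j = 1"
    using power_iterates_eventually_1[OF base _ z] z_Suc by auto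
  then show ?thesis
    unfolding z_def s_def e_eq_1_iff by blast
qed

lemma term_enum_eq_1:
  assumes "\<And>j d. d \<in> D \<Longrightarrow> e (real d * (real b ^ j * \<alpha> + \<beta>)) = 1"
  shows "term_enum \<alpha> \<beta> n = 1"
  using assms
proof (induction n arbitrary: \<alpha> rule: less_induct)
  case (less n)
  have digit_factor: "e (real (digit i) * (\<alpha> + \<beta>)) = 1" if "i < m" for i
    using less.prems[of "digit i" 0] digit_in[OF that] by simp
  show ?case
  proof (cases "n < m")
    case True
    then show ?thesis
      by (simp add: term_enum_less digit_factor)
  next
    case False
    have shifted: "e (real d * (real b ^ j * (real b * \<alpha>) + \<beta>)) = 1" if "d \<in> D" for j d
      using less.prems[OF that, of "Suc j"] by (simp add: mult_ac)
    have "term_enum (real b * \<alpha>) \<beta> (n div m - shift) = 1"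
      using False by (intro less.IH[OF enum_step_index_less shifted]) auto
    then show ?thesis
      using False m_ge_2 by (simp add: term_enum_step digit_factor)
  qed
qed

lemma term_enum_eventually_periodic:
  assumes "\<And>j d. J \<le> j \<Longrightarrow> d \<in> D \<Longrightarrow> e (real d * (real b ^ j * \<alpha> + \<beta>)) = 1"
  shows "\<exists>N0. \<forall>n\<ge>N0. term_enum \<alpha> \<beta> (n + m ^ J) = term_enum \<alpha> \<beta> n"
  using assms
proof (induction J arbitrary: \<alpha>)
  case 0
  then show ?case
    using term_enum_eq_1[of \<alpha> \<beta>] by auto
next
  case (Suc J)
  have shifted: "e (real d * (real b ^ j * (real b * \<alpha>) + \<beta>)) = 1" if "J \<le> j" "d \<in> D" for j d
    using Suc.prems[of "Suc j" d] that by (simp add: mult_ac)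
  obtain N0 where N0: "\<And>n. N0 \<le> n \<Longrightarrow> term_enum (real b * \<alpha>) \<beta> (n + m ^ J) = term_enum (real b * \<alpha>) \<beta> n"
    using Suc.IH[OF shifted] by blast
  have "term_enum \<alpha> \<beta> (n + m ^ Suc J) = term_enum \<alpha> \<beta> n" if "m * (N0 + 1) \<le> n" for n
  proof -
    have "m \<le> m * (N0 + 1)"
      by simp
    then have "m \<le> n"
      using that by linarith
    have "N0 + 1 \<le> n div m"
      using div_le_mono[OF that, of m] m_ge_2 by simp
    then have "N0 \<le> n div m - shift"
      using shift_le_1 by linarith
    have mod_eq: "(n + m ^ Suc J) mod m = n mod m"
      by simp
    have div_eq: "(n + m ^ Suc J) div m - shift = (n div m - shift) + m ^ J"
      using m_ge_2 \<open>N0 + 1 \<le> n div m\<close> shift_le_1 by simp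
    have "term_enum \<alpha> \<beta> (n + m ^ Suc J)
        = e (real (digit ((n + m ^ Suc J) mod m)) * (\<alpha> + \<beta>)) * term_enum (real b * \<alpha>) \<beta> ((n + m ^ Suc J) div m - shift)"
      using \<open>m \<le> n\<close> by (intro term_enum_step) simp
    also have "\<dots> = e (real (digit (n mod m)) * (\<alpha> + \<beta>)) * term_enum (real b * \<alpha>) \<beta> ((n div m - shift) + m ^ J)"
      unfolding mod_eq div_eq ..
    also have "\<dots> = term_enum \<alpha> \<beta> n"
      using \<open>m \<le> n\<close> N0[OF \<open>N0 \<le> n div m - shift\<close>] by (simp add: term_enum_step[of n])
    finally show ?thesis .
  qed
  then show ?case by blast
qed

lemma sD_pos: "sD D > 0"
proof -
  have "digit 0 \<in> D" "digit 1 \<in> D" "digit 0 < digit 1"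
    using m_ge_2 by (auto intro: digit_in digit_strict_mono)
  then have "sD D dvd int (digit 1) - int (digit 0)" "int (digit 1) - int (digit 0) \<noteq> 0"
    unfolding sD_def by (auto intro: Gcd_dvd)
  then have "sD D \<noteq> 0"
    by auto
  moreover have "sD D \<ge> 0"
    by (simp add: sD_def)
  ultimately show ?thesis
    by simp
qed

lemma exceptional_and_rational_if_not_tendsto_0:
  assumes "\<not> digit_mean_prod \<alpha> \<beta> \<longlonglongrightarrow> 0"
  shows "exceptional b (sD D) \<alpha> \<beta> \<and> \<alpha> \<in> \<rat> \<and> \<beta> \<in> \<rat>"
proof -
  obtain J where J: "\<And>j. J \<le> j \<Longrightarrow> of_int (sD D) * (real b ^ j * \<alpha> + \<beta>) \<in> \<int>"
    using sD_Ints_eventually[OF assms] by blast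
  show ?thesis
    using exceptional_if_consecutive_Ints[OF base J J] rational_if_consecutive_Ints[OF base _ J J] sD_pos
    by auto
qed

lemma e_digit_mult_eq_1:
  assumes "\<forall>d\<in>D. sD D dvd int d" "of_int (sD D) * x \<in> \<int>" "d \<in> D"
  shows "e (real d * x) = 1"
proof -
  obtain k where "int d = sD D * k"
    using assms(1,3) by blast
  then have "real_of_int (int d) = of_int (sD D * k)"
    by (rule arg_cong)
  then have "real d * x = of_int k * (of_int (sD D) * x)"
    by (simp add: mult_ac)
  also have "\<dots> \<in> \<int>"
    by (rule Ints_mult[OF Ints_of_int assms(2)])
  finally show ?thesis
    by (simp add: e_eq_1_iff)
qed

lemma avgC_convergent:
  assumes "\<forall>d\<in>D. sD D dvd int d"
  shows "convergent (avgC b D \<alpha> \<beta>) \<and> (lim (avgC b D \<alpha> \<beta>) \<noteq> 0 \<longrightarrow> exceptional b (sD D) \<alpha> \<beta>)"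
proof (cases "digit_mean_prod \<alpha> \<beta> \<longlonglongrightarrow> 0")
  case True
  then have "avgC b D \<alpha> \<beta> \<longlonglongrightarrow> 0"
    by (rule avgC_tendsto_0)
  then show ?thesis
    by (auto simp: convergent_def limI)
next
  case False
  obtain J where J: "\<And>j. J \<le> j \<Longrightarrow> of_int (sD D) * (real b ^ j * \<alpha> + \<beta>) \<in> \<int>"
    using sD_Ints_eventually[OF False] by blast
  have "e (real d * (real b ^ j * \<alpha> + \<beta>)) = 1" if "J \<le> j" "d \<in> D" for j d
    using e_digit_mult_eq_1[OF assms J[OF \<open>J \<le> j\<close>] \<open>d \<in> D\<close>] .
  then obtain N0 where "\<And>n. N0 \<le> n \<Longrightarrow> term_enum \<alpha> \<beta> (n + m ^ J) = term_enum \<alpha> \<beta> n"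
    using term_enum_eventually_periodic by blast
  then have "convergent (\<lambda>N. (\<Sum>k<N. term_enum \<alpha> \<beta> k) / of_nat N)"
    using m_ge_2 by (intro convergent_Cesaro_eventually_periodic[of "m ^ J" N0]) auto
  moreover have "avgC b D \<alpha> \<beta> = (\<lambda>N. (\<Sum>k<N. term_enum \<alpha> \<beta> k) / of_nat N)"
    by (simp add: fun_eq_iff avgC_eq_window_sum window_sum_def)
  ultimately show ?thesis
    using exceptional_and_rational_if_not_tendsto_0[OF False] by simp
qed

lemma avgC_tendsto_0_if_not_exceptional:
  "\<not> exceptional b (sD D) \<alpha> \<beta> \<Longrightarrow> avgC b D \<alpha> \<beta> \<longlonglongrightarrow> 0"
  using avgC_tendsto_0 exceptional_and_rational_if_not_tendsto_0 by blast

lemma window_average_small_if_irrational: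
  fixes \<eta> :: real
  assumes "\<alpha> \<notin> \<rat> \<or> \<beta> \<notin> \<rat>" "\<eta> > 0"
  shows "\<exists>L. \<forall>M N. M < N \<and> N - M \<ge> L \<longrightarrow> norm ((\<Sum>n\<in>{M<..N}. term_e b D \<alpha> \<beta> n) / of_nat (N - M)) < \<eta>"
proof -
  have "digit_mean_prod \<alpha> \<beta> \<longlonglongrightarrow> 0"
    using assms(1) exceptional_and_rational_if_not_tendsto_0 by blast
  then obtain L0 where L0: "\<forall>M L. L0 \<le> L \<longrightarrow> norm (window_sum \<alpha> \<beta> M L) < \<eta> * L"
    using window_sum_small[OF _ assms(2)] by blast
  have "norm ((\<Sum>n\<in>{M<..N}. term_e b D \<alpha> \<beta> n) / of_nat (N - M)) < \<eta>" if "M < N" "L0 \<le> N - M" for M N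
  proof -
    have "norm ((\<Sum>n\<in>{M<..N}. term_e b D \<alpha> \<beta> n) / of_nat (N - M)) = norm (window_sum \<alpha> \<beta> M (N - M)) / real (N - M)"
      using that by (simp add: sum_term_e_eq_window_sum norm_divide del: of_nat_diff)
    also have "\<dots> < \<eta>"
      using L0 that by (simp add: divide_less_eq del: of_nat_diff)
    finally show ?thesis .
  qed
  then show ?thesis
    by blast
qed

end

theorem mainTheorem6:
  fixes b :: nat and D :: "nat set"
  assumes hb: "b \<ge> 3"
    and hD: "D \<subseteq> {0..<b}"
    and hcard: "2 \<le> card D" "card D \<le> b"
  shows
    "(sD D = 1 \<longrightarrow>
        (\<forall>\<alpha> \<beta>. convergent (avgC b D \<alpha> \<beta>) \<and>
           (lim (avgC b D \<alpha> \<beta>) \<noteq> 0 \<longrightarrow> exceptional b 1 \<alpha> \<beta>)))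
   \<and> (sD D > 1 \<and> (\<forall>d\<in>D. sD D dvd int d) \<longrightarrow>
        (\<forall>\<alpha> \<beta>. convergent (avgC b D \<alpha> \<beta>) \<and>
           (lim (avgC b D \<alpha> \<beta>) \<noteq> 0 \<longrightarrow> exceptional b (sD D) \<alpha> \<beta>)))
   \<and> (sD D > 1 \<and> (\<exists>d\<in>D. \<not> sD D dvd int d) \<longrightarrow>
        (\<forall>\<alpha> \<beta>. \<not> exceptional b (sD D) \<alpha> \<beta> \<longrightarrow> avgC b D \<alpha> \<beta> \<longlonglongrightarrow> 0))
   \<and> (\<forall>\<alpha> \<beta>. (\<alpha> \<notin> \<rat> \<or> \<beta> \<notin> \<rat>) \<longrightarrow>
        (\<forall>\<eta>>0. \<exists>L::nat. \<forall>M N::nat. M < N \<and> N - M \<ge> L \<longrightarrow>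
           norm ((\<Sum>n\<in>{M<..N}. term_e b D \<alpha> \<beta> n) / of_nat (N - M)) < \<eta>))"
proof -
  interpret digit_set b D
    using hb hD hcard by unfold_locales auto
  have "sD D = 1 \<Longrightarrow> convergent (avgC b D \<alpha> \<beta>) \<and> (lim (avgC b D \<alpha> \<beta>) \<noteq> 0 \<longrightarrow> exceptional b 1 \<alpha> \<beta>)"
    for \<alpha> \<beta>
    using avgC_convergent[of \<alpha> \<beta>] by simp
  then show ?thesis
    using avgC_convergent avgC_tendsto_0_if_not_exceptional window_average_small_if_irrational
    by blast
qed

end
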